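(* For every collectible reward decomposition MDP with $n$ rewards and every discount factor $\gamma\in(0,1)$, the value $\text{NN}$ of the Nearest Neighbor policy satisfies $\frac{\text{NN}}{\text{OPT}}\ge\frac{1}{n}$.
   Context: A collectible reward decomposition MDP is an MDP with deterministic dynamics, an initial state $s_0$, discount $\gamma$, and $n$ reward states $s_1,\dots,s_n$; visiting $s_i$ for the first time yields reward $1$ and each reward can be collected only once. Let $d_{i,j}$ be the length of the shortest path between $s_i$ and $s_j$ (with $s_0$ the start). The value of a policy is the (expected) discounted return $\sum_k \gamma^{T_k}$, where $T_k$ is the time at which the $k$-th reward is collected. $\text{OPT}=\max_{(i_1,\dots,i_n)\in\mathrm{perm}\{1,\dots,n\}}\sum_{j=0}^{n-1}\gamma^{\sum_{t=0}^{j}d_{i_t,i_{t+1}}}$ with $i_0=s_0$, the optimal value. The Nearest Neighbor (NN) policy repeatedly moves along a shortest path to the closest (in distance $d$) not yet collected reward from its current location. *)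

theory Defs
  imports "HOL-Analysis.Analysis" "HOL-Combinatorics.Permutations"
begin

definition is_traj :: "('s \<Rightarrow> 'a \<Rightarrow> 's) \<Rightarrow> (nat \<Rightarrow> 's) \<Rightarrow> bool" where
  "is_traj step \<tau> \<longleftrightarrow> (\<forall>t. \<exists>a. \<tau> (Suc t) = step (\<tau> t) a)"

definition reach_in :: "('s \<Rightarrow> 'a \<Rightarrow> 's) \<Rightarrow> 's \<Rightarrow> nat \<Rightarrow> 's \<Rightarrow> bool" where
  "reach_in step x k y \<longleftrightarrow> (\<exists>\<tau>. is_traj step \<tau> \<and> \<tau> 0 = x \<and> \<tau> k = y)"

definition reachable :: "('s \<Rightarrow> 'a \<Rightarrow> 's) \<Rightarrow> 's \<Rightarrow> 's \<Rightarrow> bool" where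
  "reachable step x y \<longleftrightarrow> (\<exists>k. reach_in step x k y)"

text \<open>Shortest-path distance (meaningful when y is reachable from x).\<close>
definition dist_sp :: "('s \<Rightarrow> 'a \<Rightarrow> 's) \<Rightarrow> 's \<Rightarrow> 's \<Rightarrow> nat" where
  "dist_sp step x y = (LEAST k. reach_in step x k y)"

definition uncollected :: "(nat \<Rightarrow> 's) \<Rightarrow> nat \<Rightarrow> (nat \<Rightarrow> 's) \<Rightarrow> nat \<Rightarrow> nat set" where
  "uncollected r n \<tau> t = {i \<in> {1..n}. \<forall>u\<le>t. \<tau> u \<noteq> r i}"

definition collect_time :: "(nat \<Rightarrow> 's) \<Rightarrow> 's \<Rightarrow> nat" where
  "collect_time \<tau> x = (LEAST t. \<tau> t = x)"

text \<open>Discounted return of a trajectory (all rewards get collected by the policies considered).\<close>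
definition traj_value :: "real \<Rightarrow> (nat \<Rightarrow> 's) \<Rightarrow> nat \<Rightarrow> (nat \<Rightarrow> 's) \<Rightarrow> real" where
  "traj_value \<gamma> r n \<tau> = (\<Sum>i\<in>{1..n}. \<gamma> ^ collect_time \<tau> (r i))"

text \<open>A trajectory generated by the Nearest Neighbour policy (with arbitrary tie breaking):
  there are decision times ts 0 = 0, ts 1, ...; at each decision time, while some reward is
  uncollected, the agent picks an uncollected reward at minimal shortest-path distance from
  its current location and follows a shortest path to it, arriving at the next decision time.
  Rewards lying on the way are collected when visited.\<close>
definition is_NN_traj :: "('s \<Rightarrow> 'a \<Rightarrow> 's) \<Rightarrow> 's \<Rightarrow> (nat \<Rightarrow> 's) \<Rightarrow> nat \<Rightarrow> (nat \<Rightarrow> 's) \<Rightarrow> bool" where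
  "is_NN_traj step s0 r n \<tau> \<longleftrightarrow> is_traj step \<tau> \<and> \<tau> 0 = s0 \<and>
     (\<exists>ts :: nat \<Rightarrow> nat. ts 0 = 0 \<and>
        (\<forall>j. uncollected r n \<tau> (ts j) \<noteq> {} \<longrightarrow>
           (\<exists>i \<in> uncollected r n \<tau> (ts j).
              (\<forall>i' \<in> uncollected r n \<tau> (ts j).
                  dist_sp step (\<tau> (ts j)) (r i) \<le> dist_sp step (\<tau> (ts j)) (r i')) \<and>
              ts (Suc j) = ts j + dist_sp step (\<tau> (ts j)) (r i) \<and>
              \<tau> (ts (Suc j)) = r i)))"

definition tour_pos :: "'s \<Rightarrow> (nat \<Rightarrow> 's) \<Rightarrow> (nat \<Rightarrow> nat) \<Rightarrow> nat \<Rightarrow> 's" where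
  "tour_pos s0 r \<sigma> k = (if k = 0 then s0 else r (\<sigma> k))"

definition tour_value :: "('s \<Rightarrow> 'a \<Rightarrow> 's) \<Rightarrow> real \<Rightarrow> 's \<Rightarrow> (nat \<Rightarrow> 's) \<Rightarrow> nat \<Rightarrow> (nat \<Rightarrow> nat) \<Rightarrow> real" where
  "tour_value step \<gamma> s0 r n \<sigma> =
     (\<Sum>j<n. \<gamma> ^ (\<Sum>t\<le>j. dist_sp step (tour_pos s0 r \<sigma> t) (tour_pos s0 r \<sigma> (Suc t))))"

definition OPT :: "('s \<Rightarrow> 'a \<Rightarrow> 's) \<Rightarrow> real \<Rightarrow> 's \<Rightarrow> (nat \<Rightarrow> 's) \<Rightarrow> nat \<Rightarrow> real" where
  "OPT step \<gamma> s0 r n = Max (tour_value step \<gamma> s0 r n ` {\<sigma>. \<sigma> permutes {1..n}})"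

end

theory Submission
  imports Defs
begin

text \<open>Some reward is collected by the Nearest Neighbour trajectory no later than the distance
  d from s0 to the closest reward: its first leg has length exactly d. Every tour also starts
  with a leg of length at least d, so each of its n summands, and hence OPT / n, is at most
  \<gamma>^d, which in turn is one of the summands of the Nearest Neighbour value.\<close>

lemma tour_value_le_mult_power:
  fixes \<gamma> :: real
  assumes "\<sigma> permutes {1..n}" "0 \<le> \<gamma>" "\<gamma> \<le> 1"
    and "\<forall>i\<in>{1..n}. c \<le> dist_sp step s0 (r i)"
  shows "tour_value step \<gamma> s0 r n \<sigma> \<le> real n * \<gamma> ^ c"
proof -
  have "\<gamma> ^ (\<Sum>t\<le>j. dist_sp step (tour_pos s0 r \<sigma> t) (tour_pos s0 r \<sigma> (Suc t))) \<le> \<gamma> ^ c"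
    if "j < n" for j
  proof -
    have "\<sigma> 1 \<in> {1..n}"
      using that permutes_in_image[OF assms(1), of 1] by simp
    then have "c \<le> dist_sp step (tour_pos s0 r \<sigma> 0) (tour_pos s0 r \<sigma> (Suc 0))"
      using assms(4) by (simp add: tour_pos_def)
    also have "\<dots> \<le> (\<Sum>t\<le>j. dist_sp step (tour_pos s0 r \<sigma> t) (tour_pos s0 r \<sigma> (Suc t)))"
      by (rule member_le_sum) auto
    finally show ?thesis
      using assms(2,3) by (rule power_decreasing)
  qed
  then have "tour_value step \<gamma> s0 r n \<sigma> \<le> (\<Sum>j<n. \<gamma> ^ c)"
    unfolding tour_value_def by (intro sum_mono) auto
  then show ?thesis by simp
qed

lemma tour_value_pos:
  fixes \<gamma> :: real
  assumes "0 < \<gamma>" "n \<ge> 1"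
  shows "0 < tour_value step \<gamma> s0 r n \<sigma>"
  unfolding tour_value_def using assms
  by (intro sum_pos) (auto simp: lessThan_empty_iff)

lemma finite_tour_values: "finite (tour_value step \<gamma> s0 r n ` {\<sigma>. \<sigma> permutes {1..n}})"
  by (simp add: finite_permutations)

lemma OPT_pos:
  fixes \<gamma> :: real
  assumes "0 < \<gamma>" "n \<ge> 1"
  shows "0 < OPT step \<gamma> s0 r n"
proof -
  have "tour_value step \<gamma> s0 r n id \<le> OPT step \<gamma> s0 r n"
    unfolding OPT_def using finite_tour_values permutes_id by (intro Max_ge) auto
  with tour_value_pos[OF assms] show ?thesis by (rule less_le_trans)
qed

lemma OPT_le_mult_power:
  fixes \<gamma> :: real
  assumes "0 \<le> \<gamma>" "\<gamma> \<le> 1"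
    and "\<forall>i\<in>{1..n}. c \<le> dist_sp step s0 (r i)"
  shows "OPT step \<gamma> s0 r n \<le> real n * \<gamma> ^ c"
  unfolding OPT_def using finite_tour_values tour_value_le_mult_power[OF _ assms]
  by (subst Max_le_iff) (auto intro: permutes_id)

lemma NN_traj_collects_nearest_reward_early:
  assumes "is_NN_traj step s0 r n \<tau>" "n \<ge> 1"
  obtains i where "i \<in> {1..n}" "\<forall>i'\<in>{1..n}. collect_time \<tau> (r i) \<le> dist_sp step s0 (r i')"
proof (cases "\<exists>i\<in>{1..n}. r i = s0")
  case True
  then obtain i where i: "i \<in> {1..n}" "r i = s0" by blast
  have "collect_time \<tau> (r i) = 0"
    using assms(1) i(2) unfolding collect_time_def is_NN_traj_def by simp
  with i(1) that show ?thesis by simp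
next
  case False
  from assms(1) obtain ts where t0: "\<tau> 0 = s0" and ts0: "ts 0 = 0" and
    first_leg: "uncollected r n \<tau> (ts 0) \<noteq> {} \<Longrightarrow>
      \<exists>i \<in> uncollected r n \<tau> (ts 0).
        (\<forall>i' \<in> uncollected r n \<tau> (ts 0).
           dist_sp step (\<tau> (ts 0)) (r i) \<le> dist_sp step (\<tau> (ts 0)) (r i')) \<and>
        ts (Suc 0) = ts 0 + dist_sp step (\<tau> (ts 0)) (r i) \<and> \<tau> (ts (Suc 0)) = r i"
    unfolding is_NN_traj_def by blast
  have U0: "uncollected r n \<tau> (ts 0) = {1..n}"
    using False t0 ts0 unfolding uncollected_def by auto
  with first_leg assms(2) t0 ts0 obtain i where i: "i \<in> {1..n}"
    "\<forall>i'\<in>{1..n}. dist_sp step s0 (r i) \<le> dist_sp step s0 (r i')"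
    "\<tau> (dist_sp step s0 (r i)) = r i"
    by auto
  have "collect_time \<tau> (r i) \<le> dist_sp step s0 (r i)"
    unfolding collect_time_def using i(3) by (rule Least_le)
  with i(1,2) that show ?thesis by (meson le_trans)
qed

lemma power_collect_time_le_traj_value:
  fixes \<gamma> :: real
  assumes "i \<in> {1..n}" "0 \<le> \<gamma>"
  shows "\<gamma> ^ collect_time \<tau> (r i) \<le> traj_value \<gamma> r n \<tau>"
  unfolding traj_value_def using assms by (intro member_le_sum) auto

theorem theorem1:
  fixes step :: "'s \<Rightarrow> 'a \<Rightarrow> 's" and s0 :: 's and r :: "nat \<Rightarrow> 's"
    and n :: nat and \<gamma> :: real and \<tau> :: "nat \<Rightarrow> 's"
  assumes "n \<ge> 1"
    and "inj_on r {1..n}"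
    and "\<forall>i\<in>{1..n}. reachable step s0 (r i)"
    and "\<forall>i\<in>{1..n}. \<forall>j\<in>{1..n}. reachable step (r i) (r j)"
    and "0 < \<gamma>" and "\<gamma> < 1"
    and "is_NN_traj step s0 r n \<tau>"
  shows "traj_value \<gamma> r n \<tau> / OPT step \<gamma> s0 r n \<ge> 1 / real n"
proof -
  obtain i where i: "i \<in> {1..n}"
    and early: "\<forall>i'\<in>{1..n}. collect_time \<tau> (r i) \<le> dist_sp step s0 (r i')"
    using NN_traj_collects_nearest_reward_early[OF assms(7,1)] .
  have "OPT step \<gamma> s0 r n \<le> real n * \<gamma> ^ collect_time \<tau> (r i)"
    using assms(5,6) early by (intro OPT_le_mult_power) auto
  also have "\<dots> \<le> real n * traj_value \<gamma> r n \<tau>"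
    using i assms(5) by (intro mult_left_mono power_collect_time_le_traj_value) auto
  finally have "OPT step \<gamma> s0 r n \<le> real n * traj_value \<gamma> r n \<tau>" .
  then show ?thesis
    using OPT_pos[OF assms(5,1), of step s0 r] assms(1) by (simp add: divide_simps mult.commute)
qed

end
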